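(* Assume the following setup. Let $a,x,u,v$ be integers with $3\le a\le x$, $0\le u\le a-3$, and $u+2\le v\le\min\left(a-1,\frac{a(x-1)}{x}\right)$. Let $\lambda$ consist of $ua+v$ parts equal to $x$ and $v-(u+1)$ parts equal to $ax$, and let $n=|\lambda|$, so that $n=x[(a+1)(v-1)+1]$ and $n-1=xa(v-1)+xv-1$. For $0\le i\le n-2$ write uniquely $i=\frac{n}{x}r_i+(v-1)p_i+q_i$ with integers $0\le r_i<x$, $0\le p_i<a+2$, $0\le q_i<v-1$, $0\le (v-1)p_i+q_i<n/x$. Define \[ s_{2,i}=iax-(n-1)\left\lfloor\frac{iax}{n-1}\right\rfloor,\qquad f(i)=ar_i-(xv-1)p_i+xaq_i, \] and for an integer $k$ let $F_k=\left\{i\in\{1,\dots,n-2\}: k=-\left\lfloor \frac{f(i)}{n-1}\right\rfloor\right\}$. If $i\in F_k$, then $s_{2,i}=f(i)+k(n-1)$. *)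

theory Defs
  imports Complex_Main
begin

definition lam_size :: "int \<Rightarrow> int \<Rightarrow> int \<Rightarrow> int \<Rightarrow> int" where
  "lam_size a x u v = (u*a + v) * x + (v - (u+1)) * (a*x)"

text \<open>The decomposition i = (n/x) r + (v-1) p + q with the stated bounds
  (n/x is an integer since x divides n).\<close>
definition decomp :: "int \<Rightarrow> int \<Rightarrow> int \<Rightarrow> int \<Rightarrow> int \<Rightarrow> int \<times> int \<times> int \<Rightarrow> bool" where
  "decomp n a x v i t = (case t of (r, p, q) \<Rightarrow>
     i = (n div x) * r + (v-1) * p + q \<and> 0 \<le> r \<and> r < x \<and> 0 \<le> p \<and> p < a + 2 \<and>
     0 \<le> q \<and> q < v - 1 \<and> 0 \<le> (v-1)*p + q \<and> (v-1)*p + q < n div x)"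

definition rpq :: "int \<Rightarrow> int \<Rightarrow> int \<Rightarrow> int \<Rightarrow> int \<Rightarrow> int \<times> int \<times> int" where
  "rpq n a x v i = (THE t. decomp n a x v i t)"

definition fval :: "int \<Rightarrow> int \<Rightarrow> int \<Rightarrow> int \<Rightarrow> int \<Rightarrow> int" where
  "fval n a x v i = (case rpq n a x v i of (r, p, q) \<Rightarrow> a*r - (x*v - 1)*p + x*a*q)"

definition s2 :: "int \<Rightarrow> int \<Rightarrow> int \<Rightarrow> int \<Rightarrow> int" where
  "s2 n a x i = i*a*x - (n-1) * \<lfloor>real_of_int (i*a*x) / real_of_int (n-1)\<rfloor>"

definition Fset :: "int \<Rightarrow> int \<Rightarrow> int \<Rightarrow> int \<Rightarrow> int \<Rightarrow> int set" where
  "Fset n a x v k = {i. 1 \<le> i \<and> i \<le> n - 2 \<and>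
      k = - \<lfloor>real_of_int (fval n a x v i) / real_of_int (n-1)\<rfloor>}"

end

theory Submission
  imports Defs
begin

text \<open>With n = x((a+1)(v-1)+1), substituting i = (n/x) r_i + (v-1) p_i + q_i gives the
  polynomial identity i a x = f(i) + (n-1)(a r_i + p_i). Hence s_{2,i} = (i a x) mod (n-1)
  = f(i) mod (n-1), which is f(i) + k(n-1) for i \<in> F_k because k = -\<lfloor>f(i)/(n-1)\<rfloor>.\<close>

lemma lam_size_eq: "lam_size a x u v = x * ((a+1)*(v-1)+1)"
  unfolding lam_size_def by (simp add: algebra_simps)

lemma decomp_eq_divmod:
  assumes "decomp n a x v i (r, p, q)"
  shows "(r, p, q) = (i div (n div x), (i mod (n div x)) div (v-1), (i mod (n div x)) mod (v-1))"
proof -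
  have i: "i = (n div x) * r + ((v-1)*p + q)" "0 \<le> (v-1)*p + q" "(v-1)*p + q < n div x"
    and q: "0 \<le> q" "q < v-1"
    using assms unfolding decomp_def by simp_all
  have r: "r = i div (n div x)" and s: "i mod (n div x) = (v-1)*p + q"
    using int_div_pos_eq[OF i] int_mod_pos_eq[OF i] by simp_all
  have "p = (i mod (n div x)) div (v-1)" "q = (i mod (n div x)) mod (v-1)"
    using int_div_pos_eq[OF s q] int_mod_pos_eq[OF s q] by simp_all
  with r show ?thesis by simp
qed

lemma decomp_divmod:
  fixes a x v i n :: int
  assumes n: "n = x * ((a+1)*(v-1)+1)" and "0 < x" "2 \<le> v" "0 \<le> a" "0 \<le> i" "i < n"
  shows "decomp n a x v i (i div (n div x), (i mod (n div x)) div (v-1), (i mod (n div x)) mod (v-1))"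
proof -
  define m where "m = (a+1)*(v-1)+1"
  have nm: "n div x = m" using assms m_def by simp
  have m: "0 < m" "0 < v - 1" using assms m_def by simp_all
  define w where "w = i mod m"
  have "0 \<le> w" "w < m" using m w_def by auto
  then have w: "0 \<le> w" "w \<le> (a+1)*(v-1)" using m_def by simp_all
  have "i div m * m < x * m"
    using assms m m_def by (smt (verit) minus_mod_eq_div_mult pos_mod_sign)
  then have "i div m < x" by (rule mult_right_less_imp_less) (use m in simp)
  moreover have "w div (v-1) < a + 2"
  proof -
    have "w div (v-1) \<le> ((a+1)*(v-1)) div (v-1)" using w m by (simp only: zdiv_mono1)
    then show ?thesis using m by simp
  qed
  moreover have "i = m * (i div m) + (v-1) * (w div (v-1)) + w mod (v-1)"
    using w_def by simp
  ultimately show ?thesis unfolding decomp_def nm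
    using assms m w w_def[symmetric] m_def by (simp add: pos_imp_zdiv_nonneg_iff)
qed

lemma rpq_eq_divmod:
  fixes a x v i n :: int
  assumes "n = x * ((a+1)*(v-1)+1)" "0 < x" "2 \<le> v" "0 \<le> a" "0 \<le> i" "i < n"
  shows "rpq n a x v i = (i div (n div x), (i mod (n div x)) div (v-1), (i mod (n div x)) mod (v-1))"
  unfolding rpq_def
proof (rule the_equality)
  show "decomp n a x v i (i div (n div x), (i mod (n div x)) div (v-1), (i mod (n div x)) mod (v-1))"
    using decomp_divmod[OF assms] .
qed (metis decomp_eq_divmod prod_cases3)

lemma times_ax_eq_fval:
  fixes a x v i n :: int
  assumes n: "n = x * ((a+1)*(v-1)+1)" and "0 < x" and "rpq n a x v i = (r, p, q)"
    and "decomp n a x v i (r, p, q)"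
  shows "i*a*x = fval n a x v i + (n-1)*(a*r + p)"
proof -
  have "n div x = (a+1)*(v-1)+1" using n \<open>0 < x\<close> by simp
  then have i: "i = ((a+1)*(v-1)+1) * r + (v-1)*p + q" using assms(4) unfolding decomp_def by simp
  have f: "fval n a x v i = a*r - (x*v-1)*p + x*a*q" unfolding fval_def assms(3) by simp
  have "(((a+1)*(v-1)+1) * r + (v-1)*p + q)*a*x = (a*r - (x*v-1)*p + x*a*q) + (n-1)*(a*r + p)"
    unfolding n by (simp add: algebra_simps)
  then show ?thesis using i f by simp
qed

lemma mod_eq_minus_floor_divide:
  fixes y m :: int
  shows "y mod m = y - m * \<lfloor>real_of_int y / real_of_int m\<rfloor>"
  unfolding floor_divide_of_int_eq by (simp add: minus_mult_div_eq_mod)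

lemma s2_eq_fval_mod:
  fixes a x v i n :: int
  assumes "n = x * ((a+1)*(v-1)+1)" "0 < x" "2 \<le> v" "0 \<le> a" "0 \<le> i" "i < n"
  shows "s2 n a x i = fval n a x v i mod (n-1)"
proof -
  have "s2 n a x i = (i*a*x) mod (n-1)"
    unfolding s2_def mod_eq_minus_floor_divide by simp
  also have "\<dots> = fval n a x v i mod (n-1)"
    using times_ax_eq_fval[OF assms(1,2) rpq_eq_divmod[OF assms] decomp_divmod[OF assms]]
    by simp
  finally show ?thesis .
qed

theorem lemma4p6:
  fixes a x u v k i :: int
  assumes "3 \<le> a" and "a \<le> x"
    and "0 \<le> u" and "u \<le> a - 3"
    and "u + 2 \<le> v" and "v \<le> a - 1"
    and "real_of_int v \<le> real_of_int (a*(x-1)) / real_of_int x"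
    and "i \<in> Fset (lam_size a x u v) a x v k"
  shows "s2 (lam_size a x u v) a x i = fval (lam_size a x u v) a x v i + k * (lam_size a x u v - 1)"
proof -
  define n where "n = lam_size a x u v"
  have i: "1 \<le> i" "i \<le> n - 2"
    and k: "k = - \<lfloor>real_of_int (fval n a x v i) / real_of_int (n-1)\<rfloor>"
    using assms(8) unfolding Fset_def n_def by auto
  have "s2 n a x i = fval n a x v i mod (n-1)"
    using s2_eq_fval_mod[of n] i assms(1-5) unfolding n_def lam_size_eq by simp
  also have "\<dots> = fval n a x v i + k*(n-1)"
    unfolding k mod_eq_minus_floor_divide by (simp add: algebra_simps)
  finally show ?thesis unfolding n_def .
qed

end
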